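(* Let $\nu\in\mathcal N$ and $N\in\mathcal N$ with $\sum_m mN^{(a)}_m=M_a$ for all $a$. If a generic string solution of pattern $N$ to the Bethe equation exists, then for every $(a,m)\in H'(N)$, every $1\le\alpha\le N^{(a)}_m$ and every $2\le i\le m$, $$\sum_{k=1}^{\min(i-1,\,m+1-i)}\Big\{d'_a\big(P^{(a)}_{m+1-2k}+N^{(a)}_{m+1-2k}\big)+\Delta^{(a)}_{m+1-2k}\Big\}>0.$$
   Context: Lie data. Fix an affine type $X^{(r)}_N$ among $A^{(1)}_n\,(n\ge1)$, $B^{(1)}_n\,(n\ge3)$, $C^{(1)}_n\,(n\ge2)$, $D^{(1)}_n\,(n\ge4)$, $E^{(1)}_{6,7,8}$, $F^{(1)}_4$, $G^{(1)}_2$, $A^{(2)}_{2n}\,(n\ge1)$, $A^{(2)}_{2n-1}\,(n\ge2)$, $D^{(2)}_{n+1}\,(n\ge2)$, $E^{(2)}_6$, $D^{(3)}_4$. Let $\mathfrak g=X_N$ (rank $N$), $\sigma$ a diagram automorphism of order $r$, $\mathfrak g_0$ the $\sigma$-invariant subalgebra ($X_N$ if $r=1$, then $n=N$; $B_n,C_n,B_n,F_4,G_2$ for $A^{(2)}_{2n},A^{(2)}_{2n-1},D^{(2)}_{n+1},E^{(2)}_6,D^{(3)}_4$), $n=\mathrm{rank}\,\mathfrak g_0$. Cartan matrices: $A_{ij}=2(\alpha_i,\alpha_j)/(\alpha_i,\alpha_i)$; $A'$ (indices $1..N$) for $\mathfrak g$, $A$ (indices $1..n$) for $\mathfrak g_0$;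 node $a\le n$ of $\mathfrak g$ lies in the $\sigma$-orbit corresponding to node $a$ of $\mathfrak g_0$, and $A_{ab}<0\iff A'_{ab}<0$ ($a,b\le n$). For $A^{(2)}_{2n}$: $\mathfrak g=A_{2n}$ with nodes $1..2n$ along the chain, $\sigma(i)=2n+1-i$. $d'_i$: coprime positive integers with $(d'_iA'_{ij})$ symmetric; $d_a$: coprime positive integers with $(d_aA_{ab})$ symmetric. $\epsilon'_i=r$ if $\sigma(i)=i$, else $1$; $\epsilon_a=2$ if $A'_{a\sigma(a)}<0$, else $1$; $\kappa_0=2$ for $A^{(2)}_{2n}$, else $1$; $\epsilon'_{ab}=\max(\epsilon'_a,\epsilon'_b)$; $\tilde n=n+1$ for $A^{(2)}_{2n}$ and $\tilde n=n$ otherwise (index $n+1$ refers to node $n+1=\sigma(n)$ of $A_{2n}$, with $\epsilon'_{n+1}=d'_{n+1}=1$). $H=\{(a,m):1\le a\le n,m\ge1\}$; $\mathcal N$ = finitely supported families $(N^{(a)}_m)_{(a,m)\in H}$ of nonnegative integers; $H'(N)=\{(a,m):N^{(a)}_m>0\}$. For $\nu,N\in\mathcal N$: $\gamma^{(a)}_m=\sum_k\min(m,k)\nu^{(a)}_k$; $P^{(a)}_m=\gamma^{(a)}_m-\sum_{(b,k)\in H}\frac{A_{ab}}{\epsilon_ad'_b}\min(d'_am,d'_bk)N^{(b)}_k$. $\Delta^{(a)}_j=0$, except when $r=1$ and there is $a'$ with $d_a>d_{a'}=1$ and $A_{aa'}\ne0$, in which case $\Delta^{(a)}_j=-N^{(a')}_{2j}$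 if $d_a=2$ and $\Delta^{(a)}_j=-(N^{(a')}_{3j-1}+N^{(a')}_{3j}+N^{(a')}_{3j+1})$ if $d_a=3$. Bethe equation. Given $\nu$ and $M_1,\dots,M_n\ge0$, unknowns $x^{(a)}_i$ ($1\le a\le n$, $1\le i\le M_a$); for $A^{(2)}_{2n}$ set $x^{(n+1)}_j:=-x^{(n)}_j$, $M_{n+1}:=M_n$. The equation is $F^{(a)}_{i+}G^{(a)}_{i-}=F^{(a)}_{i-}G^{(a)}_{i+}$ for all $a,i$, with $F^{(a)}_{i+}=\prod_{k\ge1}(x^{(a)}_iq^{k\kappa_0\epsilon'_ad'_a}-1)^{\nu^{(a)}_k}$, $F^{(a)}_{i-}=\prod_{k\ge1}(x^{(a)}_i-q^{k\kappa_0\epsilon'_ad'_a})^{\nu^{(a)}_k}$, $G^{(a)}_{i+}=\prod_{b=1}^{\tilde n}\prod_{j=1}^{M_b}\big((x^{(a)}_i)^{\epsilon'_{ab}/\epsilon'_a}q^{\kappa_0\epsilon'_{ab}d'_aA'_{ab}}-(x^{(b)}_j)^{\epsilon'_{ab}/\epsilon'_b}\big)$, $G^{(a)}_{i-}=\prod_{b=1}^{\tilde n}\prod_{j=1}^{M_b}\big((x^{(a)}_i)^{\epsilon'_{ab}/\epsilon'_a}-(x^{(b)}_j)^{\epsilon'_{ab}/\epsilon'_b}q^{\kappa_0\epsilon'_{ab}d'_aA'_{ab}}\big)$. Solutions have each $x^{(a)}_i$ meromorphic in $q$ near $q=0$; $\mathrm{ord}(f)$ is the leading exponent of the Laurent expansion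 at $0$ ($\infty$ if $f\equiv0$), $f^0$ the leading coefficient, $\tilde f=q^{-\mathrm{ord}f}f$. String solutions. A string solution of pattern $N$ is a meromorphic solution with (i) $\mathrm{ord}(F^{(a)}_{i+}G^{(a)}_{i-})<\infty$ for all $(a,i)$; (ii) the unknowns can be relabeled $x^{(a)}_{m\alpha i}$ ($(a,m)\in H'(N)$, $1\le\alpha\le N^{(a)}_m$, $1\le i\le m$) with $\mathrm{ord}(x^{(a)}_{m\alpha i})=(m+1-2i)\kappa_0\epsilon'_ad'_a$ and $x^{(a)0}_{m\alpha1}=\dots=x^{(a)0}_{m\alpha m}\ne0$. Write $F^{(a)}_{m\alpha i\pm},G^{(a)}_{m\alpha i\pm}$ for the corresponding $F,G$. Put (with $N^{(n+1)}_k:=N^{(n)}_k$ for $A^{(2)}_{2n}$) $\xi^{(a)}_{m\alpha i+}=\kappa_0\epsilon'_ad'_a\sum_k\nu^{(a)}_k\min(m+1-2i+k,0)$, $\xi^{(a)}_{m\alpha i-}=\kappa_0\epsilon'_ad'_a\sum_k\nu^{(a)}_k\min(m+1-2i,k)$, $\eta^{(a)}_{m\alpha i+}=\kappa_0\sum_{b=1}^{\tilde n}\sum_{k}\sum_{\beta=1}^{N^{(b)}_k}\sum_{j=1}^k\epsilon'_{ab}\min(d'_a(m+1-2i+A'_{ab}),d'_b(k+1-2j))$, $\eta^{(a)}_{m\alpha i-}=\kappa_0\sum_{b=1}^{\tilde n}\sum_{k}\sum_{\beta=1}^{N^{(b)}_k}\sum_{j=1}^k\epsilon'_{ab}\min(d'_a(m+1-2i),d'_b(k+1-2j+A'_{ba}))$,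 $\zeta^{(a)}_{m\alpha i}=\mathrm{ord}(\tilde x^{(a)}_{m\alpha i}-\tilde x^{(a)}_{m\alpha,i-1})$ for $2\le i\le m$, $\zeta^{(a)}_{m\alpha1}=\zeta^{(a)}_{m\alpha,m+1}=0$. The string solution is generic if $\mathrm{ord}F^{(a)}_{m\alpha i\pm}=\xi^{(a)}_{m\alpha i\pm}$, $\mathrm{ord}G^{(a)}_{m\alpha i+}=\eta^{(a)}_{m\alpha i+}+\zeta^{(a)}_{m\alpha i}$, $\mathrm{ord}G^{(a)}_{m\alpha i-}=\eta^{(a)}_{m\alpha i-}+\zeta^{(a)}_{m\alpha,i+1}$ for all indices. *)

theory Defs
  imports "HOL-Complex_Analysis.Laurent_Convergence"
begin

section \<open>Finite-type Cartan data (Bourbaki numbering)\<close>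

datatype fintype = FA nat | FB nat | FC nat | FD nat | FE6 | FE7 | FE8 | FF4 | FG2

text \<open>Cartan matrix entries A_ij = 2(alpha_i,alpha_j)/(alpha_i,alpha_i), nodes numbered 1..rank
  as in Bourbaki (B_n, C_n: alpha_n is the short resp. long root; F_4: alpha_1, alpha_2 long;
  G_2: alpha_1 short; D_n: alpha_(n-2) adjacent to alpha_(n-1) and alpha_n;
  E: chain 1-3-4-5-6-7-8 with 2 attached to 4).  Only entries with indices in 1..rank are used.\<close>

definition chain_adj :: "nat \<Rightarrow> nat \<Rightarrow> bool" where
  "chain_adj i j \<longleftrightarrow> i + 1 = j \<or> j + 1 = i"

definition E_adj :: "nat \<Rightarrow> nat \<Rightarrow> nat \<Rightarrow> bool" where
  "E_adj r i j \<longleftrightarrow> i \<le> r \<and> j \<le> r \<and>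
     ({i, j} = {1, 3} \<or> {i, j} = {2, 4} \<or> (3 \<le> i \<and> 3 \<le> j \<and> chain_adj i j))"

fun cartan :: "fintype \<Rightarrow> nat \<Rightarrow> nat \<Rightarrow> int" where
  "cartan (FA n) i j = (if i = j then 2 else if chain_adj i j then -1 else 0)"
| "cartan (FB n) i j = (if i = j then 2 else if i = n \<and> j = n - 1 then -2
                        else if chain_adj i j then -1 else 0)"
| "cartan (FC n) i j = (if i = j then 2 else if i = n - 1 \<and> j = n then -2
                        else if chain_adj i j then -1 else 0)"
| "cartan (FD n) i j = (if i = j then 2
                        else if (chain_adj i j \<and> i \<le> n - 1 \<and> j \<le> n - 1) \<or> {i, j} = {n - 2, n}
                        then -1 else 0)"
| "cartan FE6 i j = (if i = j then 2 else if E_adj 6 i j then -1 else 0)"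
| "cartan FE7 i j = (if i = j then 2 else if E_adj 7 i j then -1 else 0)"
| "cartan FE8 i j = (if i = j then 2 else if E_adj 8 i j then -1 else 0)"
| "cartan FF4 i j = (if i = j then 2 else if i = 3 \<and> j = 2 then -2
                     else if chain_adj i j then -1 else 0)"
| "cartan FG2 i j = (if i = j then 2 else if i = 1 \<and> j = 2 then -3
                     else if i = 2 \<and> j = 1 then -1 else 0)"

text \<open>Coprime positive integers d_i with (d_i A_ij) symmetric.\<close>
fun dsym :: "fintype \<Rightarrow> nat \<Rightarrow> nat" where
  "dsym (FB n) i = (if i = n then 1 else 2)"
| "dsym (FC n) i = (if i = n then 2 else 1)"
| "dsym FF4 i = (if i \<le> 2 then 2 else 1)"
| "dsym FG2 i = (if i = 1 then 1 else 3)"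
| "dsym _ i = 1"

datatype afftype =
    A1 nat | B1 nat | C1 nat | D1 nat | E6_1 | E7_1 | E8_1 | F4_1 | G2_1
  | A2_even nat   \<comment> \<open>A^(2)_(2n)\<close>
  | A2_odd nat    \<comment> \<open>A^(2)_(2n-1)\<close>
  | D2 nat        \<comment> \<open>D^(2)_(n+1)\<close>
  | E6_2 | D4_3

fun valid_type :: "afftype \<Rightarrow> bool" where
  "valid_type (A1 n) = (n \<ge> 1)"
| "valid_type (B1 n) = (n \<ge> 3)"
| "valid_type (C1 n) = (n \<ge> 2)"
| "valid_type (D1 n) = (n \<ge> 4)"
| "valid_type (A2_even n) = (n \<ge> 1)"
| "valid_type (A2_odd n) = (n \<ge> 2)"
| "valid_type (D2 n) = (n \<ge> 2)"
| "valid_type _ = True"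

fun g_type :: "afftype \<Rightarrow> fintype" where
  "g_type (A1 n) = FA n" | "g_type (B1 n) = FB n" | "g_type (C1 n) = FC n"
| "g_type (D1 n) = FD n" | "g_type E6_1 = FE6" | "g_type E7_1 = FE7" | "g_type E8_1 = FE8"
| "g_type F4_1 = FF4" | "g_type G2_1 = FG2"
| "g_type (A2_even n) = FA (2 * n)" | "g_type (A2_odd n) = FA (2 * n - 1)"
| "g_type (D2 n) = FD (n + 1)" | "g_type E6_2 = FE6" | "g_type D4_3 = FD 4"

text \<open>The sigma-invariant subalgebra g_0\<close>
fun g0_type :: "afftype \<Rightarrow> fintype" where
  "g0_type (A2_even n) = FB n" | "g0_type (A2_odd n) = FC n" | "g0_type (D2 n) = FB n"
| "g0_type E6_2 = FF4" | "g0_type D4_3 = FG2" | "g0_type t = g_type t"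

fun rk :: "afftype \<Rightarrow> nat" where
  "rk (A1 n) = n" | "rk (B1 n) = n" | "rk (C1 n) = n" | "rk (D1 n) = n"
| "rk E6_1 = 6" | "rk E7_1 = 7" | "rk E8_1 = 8" | "rk F4_1 = 4" | "rk G2_1 = 2"
| "rk (A2_even n) = n" | "rk (A2_odd n) = n" | "rk (D2 n) = n" | "rk E6_2 = 4" | "rk D4_3 = 2"

fun tw :: "afftype \<Rightarrow> nat" where
  "tw (A2_even n) = 2" | "tw (A2_odd n) = 2" | "tw (D2 n) = 2" | "tw E6_2 = 2"
| "tw D4_3 = 3" | "tw _ = 1"

fun is_A2_even :: "afftype \<Rightarrow> bool" where
  "is_A2_even (A2_even n) = True" | "is_A2_even _ = False"

text \<open>Relabelling of the nodes of g (so that node a \<le> n of g lies in the sigma-orbit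
  corresponding to node a of g_0): a node label of g is sent to its Bourbaki label.\<close>
fun glabel :: "afftype \<Rightarrow> nat \<Rightarrow> nat" where
  "glabel E6_2 i = (if i = 1 then 2 else if i = 2 then 4 else if i = 4 then 1 else i)"
| "glabel _ i = i"

definition Ap :: "afftype \<Rightarrow> nat \<Rightarrow> nat \<Rightarrow> int" where
  "Ap t i j = cartan (g_type t) (glabel t i) (glabel t j)"

definition Ac :: "afftype \<Rightarrow> nat \<Rightarrow> nat \<Rightarrow> int" where
  "Ac t a b = cartan (g0_type t) a b"

fun sigma :: "afftype \<Rightarrow> nat \<Rightarrow> nat" where
  "sigma (A2_even n) i = 2 * n + 1 - i"
| "sigma (A2_odd n) i = 2 * n - i"
| "sigma (D2 n) i = (if i = n then n + 1 else if i = n + 1 then n else i)"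
| "sigma E6_2 i = (if i = 3 then 5 else if i = 5 then 3 else if i = 4 then 6
                   else if i = 6 then 4 else i)"
| "sigma D4_3 i = (if i = 1 then 3 else if i = 3 then 4 else if i = 4 then 1 else i)"
| "sigma _ i = i"

text \<open>d'_i for g (simply laced in all twisted cases)\<close>
definition dp :: "afftype \<Rightarrow> nat \<Rightarrow> nat" where
  "dp t i = (if tw t = 1 then dsym (g_type t) i else 1)"

definition dc :: "afftype \<Rightarrow> nat \<Rightarrow> nat" where
  "dc t a = dsym (g0_type t) a"

definition epsp :: "afftype \<Rightarrow> nat \<Rightarrow> nat" where
  "epsp t i = (if sigma t i = i then tw t else 1)"

definition epsc :: "afftype \<Rightarrow> nat \<Rightarrow> nat" where
  "epsc t a = (if Ap t a (sigma t a) < 0 then 2 else 1)"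

definition kappa0 :: "afftype \<Rightarrow> nat" where
  "kappa0 t = (if is_A2_even t then 2 else 1)"

definition epsp2 :: "afftype \<Rightarrow> nat \<Rightarrow> nat \<Rightarrow> nat" where
  "epsp2 t a b = max (epsp t a) (epsp t b)"

definition ntil :: "afftype \<Rightarrow> nat" where
  "ntil t = (if is_A2_even t then rk t + 1 else rk t)"

text \<open>Families indexed by H = {(a,m). 1 \<le> a \<le> n, m \<ge> 1}, represented as functions
  nat \<Rightarrow> nat \<Rightarrow> nat (only values on H matter); membership in the set of finitely
  supported families.\<close>
definition fin_supp :: "afftype \<Rightarrow> (nat \<Rightarrow> nat \<Rightarrow> nat) \<Rightarrow> bool" where
  "fin_supp t N \<longleftrightarrow> finite {(a, m). 1 \<le> a \<and> a \<le> rk t \<and> 1 \<le> m \<and> N a m \<noteq> 0}"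

definition supp :: "(nat \<Rightarrow> nat \<Rightarrow> nat) \<Rightarrow> nat \<Rightarrow> nat set" where
  "supp N a = {k. 1 \<le> k \<and> N a k \<noteq> 0}"

definition gam :: "(nat \<Rightarrow> nat \<Rightarrow> nat) \<Rightarrow> nat \<Rightarrow> nat \<Rightarrow> real" where
  "gam \<nu> a m = (\<Sum>k\<in>supp \<nu> a. real (min m k * \<nu> a k))"

definition vacP :: "afftype \<Rightarrow> (nat \<Rightarrow> nat \<Rightarrow> nat) \<Rightarrow> (nat \<Rightarrow> nat \<Rightarrow> nat) \<Rightarrow> nat \<Rightarrow> nat \<Rightarrow> real" where
  "vacP t \<nu> N a m = gam \<nu> a m -
     (\<Sum>b\<in>{1..rk t}. \<Sum>k\<in>supp N b.
        real_of_int (Ac t a b) / real (epsc t a * dp t b)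
        * real (min (dp t a * m) (dp t b * k)) * real (N b k))"

definition Delta :: "afftype \<Rightarrow> (nat \<Rightarrow> nat \<Rightarrow> nat) \<Rightarrow> nat \<Rightarrow> nat \<Rightarrow> int" where
  "Delta t N a j =
     (if tw t = 1 \<and> (\<exists>a'. 1 \<le> a' \<and> a' \<le> rk t \<and> dc t a > dc t a' \<and> dc t a' = 1 \<and> Ac t a a' \<noteq> 0)
      then (let a' = (SOME a'. 1 \<le> a' \<and> a' \<le> rk t \<and> dc t a > dc t a' \<and> dc t a' = 1 \<and> Ac t a a' \<noteq> 0)
            in if dc t a = 2 then - int (N a' (2 * j))
               else if dc t a = 3 then - int (N a' (3 * j - 1) + N a' (3 * j) + N a' (3 * j + 1))
               else 0)
      else 0)"

section \<open>The Bethe equation over meromorphic functions of q near 0\<close>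

text \<open>Meromorphic functions of q near 0 are represented by their Laurent expansions at 0,
  i.e. formal Laurent series with positive radius of convergence; q is fls_X.\<close>

definition qp :: "int \<Rightarrow> complex fls" where
  "qp k = fls_X_intpow k"

definition xext :: "afftype \<Rightarrow> (nat \<Rightarrow> nat \<Rightarrow> complex fls) \<Rightarrow> nat \<Rightarrow> nat \<Rightarrow> complex fls" where
  "xext t x b j = (if is_A2_even t \<and> b = rk t + 1 then - x (rk t) j else x b j)"

definition Mext :: "afftype \<Rightarrow> (nat \<Rightarrow> nat) \<Rightarrow> nat \<Rightarrow> nat" where
  "Mext t M b = (if is_A2_even t \<and> b = rk t + 1 then M (rk t) else M b)"

definition Next :: "afftype \<Rightarrow> (nat \<Rightarrow> nat \<Rightarrow> nat) \<Rightarrow> nat \<Rightarrow> nat \<Rightarrow> nat" where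
  "Next t N b k = (if is_A2_even t \<and> b = rk t + 1 then N (rk t) k else N b k)"

definition Fplus :: "afftype \<Rightarrow> (nat \<Rightarrow> nat \<Rightarrow> nat) \<Rightarrow> (nat \<Rightarrow> nat \<Rightarrow> complex fls) \<Rightarrow> nat \<Rightarrow> nat \<Rightarrow> complex fls" where
  "Fplus t \<nu> x a i = (\<Prod>k\<in>supp \<nu> a.
      (x a i * qp (int (k * kappa0 t * epsp t a * dp t a)) - 1) ^ \<nu> a k)"

definition Fminus :: "afftype \<Rightarrow> (nat \<Rightarrow> nat \<Rightarrow> nat) \<Rightarrow> (nat \<Rightarrow> nat \<Rightarrow> complex fls) \<Rightarrow> nat \<Rightarrow> nat \<Rightarrow> complex fls" where
  "Fminus t \<nu> x a i = (\<Prod>k\<in>supp \<nu> a.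
      (x a i - qp (int (k * kappa0 t * epsp t a * dp t a))) ^ \<nu> a k)"

definition Gplus :: "afftype \<Rightarrow> (nat \<Rightarrow> nat) \<Rightarrow> (nat \<Rightarrow> nat \<Rightarrow> complex fls) \<Rightarrow> nat \<Rightarrow> nat \<Rightarrow> complex fls" where
  "Gplus t M x a i = (\<Prod>b\<in>{1..ntil t}. \<Prod>j\<in>{1..Mext t M b}.
      x a i ^ (epsp2 t a b div epsp t a)
        * qp (int (kappa0 t * epsp2 t a b * dp t a) * Ap t a b)
      - xext t x b j ^ (epsp2 t a b div epsp t b))"

definition Gminus :: "afftype \<Rightarrow> (nat \<Rightarrow> nat) \<Rightarrow> (nat \<Rightarrow> nat \<Rightarrow> complex fls) \<Rightarrow> nat \<Rightarrow> nat \<Rightarrow> complex fls" where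
  "Gminus t M x a i = (\<Prod>b\<in>{1..ntil t}. \<Prod>j\<in>{1..Mext t M b}.
      x a i ^ (epsp2 t a b div epsp t a)
      - xext t x b j ^ (epsp2 t a b div epsp t b)
        * qp (int (kappa0 t * epsp2 t a b * dp t a) * Ap t a b))"

definition bethe :: "afftype \<Rightarrow> (nat \<Rightarrow> nat \<Rightarrow> nat) \<Rightarrow> (nat \<Rightarrow> nat) \<Rightarrow> (nat \<Rightarrow> nat \<Rightarrow> complex fls) \<Rightarrow> bool" where
  "bethe t \<nu> M x \<longleftrightarrow>
     (\<forall>a\<in>{1..rk t}. \<forall>i\<in>{1..M a}.
        Fplus t \<nu> x a i * Gminus t M x a i = Fminus t \<nu> x a i * Gplus t M x a i)"

text \<open>Order at q = 0 with value None standing for +infinity (f = 0); leading coefficient\<close>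
definition ordE :: "complex fls \<Rightarrow> int option" where
  "ordE f = (if f = 0 then None else Some (fls_subdegree f))"

definition lcoeff :: "complex fls \<Rightarrow> complex" where
  "lcoeff f = fls_nth f (fls_subdegree f)"

definition oplus :: "int \<Rightarrow> int option \<Rightarrow> int option" where
  "oplus e z = map_option (\<lambda>v. e + v) z"

definition Idx :: "(nat \<Rightarrow> nat \<Rightarrow> nat) \<Rightarrow> nat \<Rightarrow> (nat \<times> nat \<times> nat) set" where
  "Idx N a = {(m, \<alpha>, i). 1 \<le> m \<and> 0 < N a m \<and> 1 \<le> \<alpha> \<and> \<alpha> \<le> N a m \<and> 1 \<le> i \<and> i \<le> m}"

text \<open>lab a is the relabelling (m,alpha,i) \<mapsto> original index in 1..M_a\<close>
definition string_solution ::
  "afftype \<Rightarrow> (nat \<Rightarrow> nat \<Rightarrow> nat) \<Rightarrow> (nat \<Rightarrow> nat \<Rightarrow> nat) \<Rightarrow> (nat \<Rightarrow> nat)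
   \<Rightarrow> (nat \<Rightarrow> nat \<Rightarrow> complex fls) \<Rightarrow> (nat \<Rightarrow> nat \<times> nat \<times> nat \<Rightarrow> nat) \<Rightarrow> bool" where
  "string_solution t \<nu> N M x lab \<longleftrightarrow>
     (\<forall>a\<in>{1..rk t}. \<forall>i\<in>{1..M a}. fls_conv_radius (x a i) > 0) \<and>
     bethe t \<nu> M x \<and>
     (\<forall>a\<in>{1..rk t}. \<forall>i\<in>{1..M a}. Fplus t \<nu> x a i * Gminus t M x a i \<noteq> 0) \<and>
     (\<forall>a\<in>{1..rk t}. bij_betw (lab a) (Idx N a) {1..M a}) \<and>
     (\<forall>a\<in>{1..rk t}. \<forall>(m, \<alpha>, i)\<in>Idx N a.
        x a (lab a (m, \<alpha>, i)) \<noteq> 0 \<and>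
        fls_subdegree (x a (lab a (m, \<alpha>, i)))
          = (int m + 1 - 2 * int i) * int (kappa0 t * epsp t a * dp t a) \<and>
        lcoeff (x a (lab a (m, \<alpha>, i))) = lcoeff (x a (lab a (m, \<alpha>, 1))))"

definition xi_plus :: "afftype \<Rightarrow> (nat \<Rightarrow> nat \<Rightarrow> nat) \<Rightarrow> nat \<Rightarrow> nat \<Rightarrow> nat \<Rightarrow> int" where
  "xi_plus t \<nu> a m i = int (kappa0 t * epsp t a * dp t a) *
     (\<Sum>k\<in>supp \<nu> a. int (\<nu> a k) * min (int m + 1 - 2 * int i + int k) 0)"

definition xi_minus :: "afftype \<Rightarrow> (nat \<Rightarrow> nat \<Rightarrow> nat) \<Rightarrow> nat \<Rightarrow> nat \<Rightarrow> nat \<Rightarrow> int" where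
  "xi_minus t \<nu> a m i = int (kappa0 t * epsp t a * dp t a) *
     (\<Sum>k\<in>supp \<nu> a. int (\<nu> a k) * min (int m + 1 - 2 * int i) (int k))"

definition eta_plus :: "afftype \<Rightarrow> (nat \<Rightarrow> nat \<Rightarrow> nat) \<Rightarrow> nat \<Rightarrow> nat \<Rightarrow> nat \<Rightarrow> int" where
  "eta_plus t N a m i = int (kappa0 t) *
     (\<Sum>b\<in>{1..ntil t}. \<Sum>k\<in>supp (Next t N) b. \<Sum>\<beta>\<in>{1..Next t N b k}. \<Sum>j\<in>{1..k}.
        int (epsp2 t a b) *
        min (int (dp t a) * (int m + 1 - 2 * int i + Ap t a b))
            (int (dp t b) * (int k + 1 - 2 * int j)))"

definition eta_minus :: "afftype \<Rightarrow> (nat \<Rightarrow> nat \<Rightarrow> nat) \<Rightarrow> nat \<Rightarrow> nat \<Rightarrow> nat \<Rightarrow> int" where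
  "eta_minus t N a m i = int (kappa0 t) *
     (\<Sum>b\<in>{1..ntil t}. \<Sum>k\<in>supp (Next t N) b. \<Sum>\<beta>\<in>{1..Next t N b k}. \<Sum>j\<in>{1..k}.
        int (epsp2 t a b) *
        min (int (dp t a) * (int m + 1 - 2 * int i))
            (int (dp t b) * (int k + 1 - 2 * int j + Ap t b a)))"

definition zeta :: "(nat \<Rightarrow> nat \<Rightarrow> complex fls) \<Rightarrow> (nat \<Rightarrow> nat \<times> nat \<times> nat \<Rightarrow> nat)
                     \<Rightarrow> nat \<Rightarrow> nat \<Rightarrow> nat \<Rightarrow> nat \<Rightarrow> int option" where
  "zeta x lab a m \<alpha> i =
     (if 2 \<le> i \<and> i \<le> m
      then ordE (fls_base_factor (x a (lab a (m, \<alpha>, i)))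
                 - fls_base_factor (x a (lab a (m, \<alpha>, i - 1))))
      else Some 0)"

definition generic_string_solution ::
  "afftype \<Rightarrow> (nat \<Rightarrow> nat \<Rightarrow> nat) \<Rightarrow> (nat \<Rightarrow> nat \<Rightarrow> nat) \<Rightarrow> (nat \<Rightarrow> nat)
   \<Rightarrow> (nat \<Rightarrow> nat \<Rightarrow> complex fls) \<Rightarrow> (nat \<Rightarrow> nat \<times> nat \<times> nat \<Rightarrow> nat) \<Rightarrow> bool" where
  "generic_string_solution t \<nu> N M x lab \<longleftrightarrow>
     string_solution t \<nu> N M x lab \<and>
     (\<forall>a\<in>{1..rk t}. \<forall>(m, \<alpha>, i)\<in>Idx N a.
        ordE (Fplus t \<nu> x a (lab a (m, \<alpha>, i))) = Some (xi_plus t \<nu> a m i) \<and>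
        ordE (Fminus t \<nu> x a (lab a (m, \<alpha>, i))) = Some (xi_minus t \<nu> a m i) \<and>
        ordE (Gplus t M x a (lab a (m, \<alpha>, i))) = oplus (eta_plus t N a m i) (zeta x lab a m \<alpha> i) \<and>
        ordE (Gminus t M x a (lab a (m, \<alpha>, i))) = oplus (eta_minus t N a m i) (zeta x lab a m \<alpha> (i + 1)))"

end

theory Submission
  imports Defs
begin

text \<open>
  Fix a string (a, m, alpha) of a generic string solution and let zeta_j be the order of the
  difference of the normalised j-th and (j-1)-th members. Comparing orders at q = 0 on both sides
  of the Bethe equation at the j-th member gives
    zeta_(j+1) - zeta_j = (xi^-_j - xi^+_j) + (eta^+_j - eta^-_j),
  while zeta_1 = 0 and zeta_j > 0 for 2 <= j <= m, because all members of a string have the same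
  leading coefficient. Summing over 1 <= j <= L = min (i - 1) (m + 1 - i) < m, the right-hand sides
  add up to something positive.

  For u = m + 1 - 2j >= 1 the j-th right-hand side is at most
  kappa0 eps'_a (d'_a (P_u + N_u) + Delta_u). Its xi-part is exactly kappa0 eps'_a d'_a gamma_u.
  Its eta-part is a sum over the strings (b, k) of telescoping sums of min-differences; these have
  closed forms, and comparing them with the corresponding terms of the vacancy number, case by case
  in the Cartan data of the pair (a, b), bounds them. The only defect occurs where a long node meets
  a short one, and there it is absorbed by Delta.
\<close>

section \<open>Telescoping sums of min-differences\<close>

(* The min-terms of eta_plus and eta_minus for a root of order u at node a against a root of
   order v at node b, with p = A'_ab and q = A'_ba. *)
definition root_gap :: "int \<Rightarrow> int \<Rightarrow> int \<Rightarrow> int \<Rightarrow> int \<Rightarrow> int \<Rightarrow> int" where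
  "root_gap da db p q u v = min (da * (u + p)) (db * v) - min (da * u) (db * (v + q))"

definition string_gap :: "int \<Rightarrow> int \<Rightarrow> int \<Rightarrow> int \<Rightarrow> int \<Rightarrow> nat \<Rightarrow> int" where
  "string_gap da db p q u k = (\<Sum>j = 1..k. root_gap da db p q u (int k + 1 - 2 * int j))"

lemma string_gap_Suc_Suc:
  "string_gap da db p q u (Suc (Suc k)) =
     string_gap da db p q u k + root_gap da db p q u (int k + 1) + root_gap da db p q u (- 1 - int k)"
proof -
  have "{1..Suc (Suc k)} = insert 1 (insert (Suc (Suc k)) {Suc 1..Suc k})" by auto
  moreover have "(\<Sum>j = Suc 1..Suc k. root_gap da db p q u (int (Suc (Suc k)) + 1 - 2 * int j))
      = (\<Sum>j = 1..k. root_gap da db p q u (int k + 1 - 2 * int j))"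
    by (subst sum.shift_bounds_cl_Suc_ivl) (simp add: algebra_simps)
  ultimately show ?thesis
    by (simp add: string_gap_def algebra_simps)
qed

lemma string_gap_eqI:
  assumes "F 0 = 0" and "F 1 = root_gap da db p q u 0"
    and "\<And>k. F (Suc (Suc k)) = F k + root_gap da db p q u (int k + 1) + root_gap da db p q u (- 1 - int k)"
  shows "string_gap da db p q u k = F k"
proof (induction k rule: nat_induct2)
  case 0 then show ?case using assms(1) by (simp add: string_gap_def)
next
  case 1 then show ?case using assms(2) by (simp add: string_gap_def)
next
  case (step k) then show ?case using assms(3) by (simp add: string_gap_Suc_Suc)
qed

lemma root_gap_scale:
  "d \<ge> 0 \<Longrightarrow> root_gap d d p q u v = d * root_gap 1 1 p q u v"
  by (simp add: root_gap_def right_diff_distrib min_mult_distrib_left)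

lemma string_gap_scale:
  "d \<ge> 0 \<Longrightarrow> string_gap d d p q u k = d * string_gap 1 1 p q u k"
  unfolding string_gap_def sum_distrib_left by (intro sum.cong refl root_gap_scale)

lemma string_gap_diagonal:
  assumes "u \<ge> 1"
  shows "string_gap 1 1 2 2 u k = - 2 * min u (int k) + (if u = int k then 1 else 0)"
  using assms by (intro string_gap_eqI) (auto simp: root_gap_def min_def)

lemma string_gap_short_long:
  assumes "d \<ge> 1" "u \<ge> 1"
  shows "string_gap 1 d (- d) (- 1) u k = min u (d * int k)"
proof (rule string_gap_eqI)
  fix k :: nat
  have step: "min u (e + 2 * d) = min u e + (min (u - d) (e + d) - min u e)
      + (min (u - d) (- e - d) - min u (- e - 2 * d))" if "e \<ge> 0" for e
    using that assms by (simp add: min_def)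
  show "min u (d * int (Suc (Suc k))) = min u (d * int k) +
      root_gap 1 d (- d) (- 1) u (int k + 1) + root_gap 1 d (- d) (- 1) u (- 1 - int k)"
    using step[of "d * int k"] assms by (simp add: root_gap_def algebra_simps)
qed (use assms in \<open>simp_all add: root_gap_def min_def\<close>)

(* For d >= 4 the correction term is no longer a tent function. *)
lemma long_short_step:
  fixes d w k :: int
  assumes "d \<in> {1, 2, 3}" "w \<ge> d" "k \<ge> 0"
  shows "d * min w (k + 2) - max 0 (d - 1 - \<bar>k + 2 - w\<bar>) =
    d * min w k - max 0 (d - 1 - \<bar>k - w\<bar>) + (min (w - d) (k + 1) - min w (k + 1 - d))
    + (min (w - d) (- 1 - k) - min w (- 1 - k - d))"
  using assms by (auto simp: min_def max_def abs_if)

lemma string_gap_long_short: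
  assumes "d \<in> {1, 2, 3}" "u \<ge> 1"
  shows "string_gap d 1 (- 1) (- d) u k = d * min (d * u) (int k) - max 0 (d - 1 - \<bar>int k - d * u\<bar>)"
proof -
  define w where "w = d * u"
  have "w \<ge> d" using assms by (auto simp: w_def)
  have gap: "root_gap d 1 (- 1) (- d) u v = min (w - d) v - min w (v - d)" for v
    by (simp add: root_gap_def w_def algebra_simps)
  show ?thesis
    unfolding w_def[symmetric]
  proof (rule string_gap_eqI)
    fix k :: nat
    have "int (Suc (Suc k)) = int k + 2" by simp
    then show "d * min w (int (Suc (Suc k))) - max 0 (d - 1 - \<bar>int (Suc (Suc k)) - w\<bar>) =
          d * min w (int k) - max 0 (d - 1 - \<bar>int k - w\<bar>) +
          root_gap d 1 (- 1) (- d) u (int k + 1) + root_gap d 1 (- 1) (- d) u (- 1 - int k)"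
      unfolding gap by (metis long_short_step assms(1) \<open>w \<ge> d\<close> of_nat_0_le_iff)
  qed (use assms(1) \<open>w \<ge> d\<close> in \<open>auto simp: gap min_def max_def abs_if\<close>)
qed

section \<open>Cartan data\<close>

lemma dp_pos: "dp t a > 0"
  by (cases "g_type t") (auto simp: dp_def)

lemma Ap_diag [simp]: "Ap t a a = 2"
  by (cases "g_type t") (simp_all add: Ap_def)

lemma Ac_diag [simp]: "Ac t a a = 2"
  by (cases "g0_type t") (simp_all add: Ac_def)

lemma epsp_pos: "epsp t a > 0"
  by (cases t) (simp_all add: epsp_def)

lemma untwisted_epsp: "tw t = 1 \<Longrightarrow> epsp t a = 1"
  by (simp add: epsp_def)

lemma untwisted_epsp2: "tw t = 1 \<Longrightarrow> epsp2 t a b = 1"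
  by (simp add: epsp2_def untwisted_epsp)

lemma untwisted_epsc: "tw t = 1 \<Longrightarrow> epsc t a = 1"
  by (cases t) (simp_all add: epsc_def)

lemma untwisted_dc: "tw t = 1 \<Longrightarrow> dc t a = dp t a"
  by (cases t) (auto simp: dc_def dp_def)

lemma epsp_A2_odd: "epsp (A2_odd n) a = (if a = n then 2 else 1)"
  by (simp add: epsp_def) arith

lemma epsc_A2_odd: "a \<in> {1..n} \<Longrightarrow> epsc (A2_odd n) a = 1"
  by (simp add: epsc_def Ap_def chain_adj_def) presburger

lemma epsp_D2: "a \<le> n \<Longrightarrow> epsp (D2 n) a = (if a = n then 1 else 2)"
  by (simp add: epsp_def)

lemma Ap_D2:
  "a \<le> n \<Longrightarrow> b \<le> n \<Longrightarrow> Ap (D2 n) a b = (if a = b then 2 else if chain_adj a b then -1 else 0)"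
  by (auto simp: Ap_def doubleton_eq_iff)

lemma epsc_D2: "a \<in> {1..n} \<Longrightarrow> epsc (D2 n) a = 1"
  by (simp add: epsc_def Ap_def chain_adj_def doubleton_eq_iff) arith

lemma epsp_A2_even: "epsp (A2_even n) a = 1"
  by (simp add: epsp_def) arith

lemma epsc_A2_even: "a \<in> {1..n} \<Longrightarrow> epsc (A2_even n) a = (if a = n then 2 else 1)"
  by (simp add: epsc_def Ap_def chain_adj_def) presburger

section \<open>Bounds on the contribution of a single string\<close>

definition node_gap :: "afftype \<Rightarrow> nat \<Rightarrow> nat \<Rightarrow> nat \<Rightarrow> nat \<Rightarrow> int" where
  "node_gap t a b u k =
     int (epsp2 t a b) * string_gap (int (dp t a)) (int (dp t b)) (Ap t a b) (Ap t b a) (int u) k"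

(* For A^(2)_(2n), node n of g_0 is the sigma-orbit {n, n + 1} of A_(2n); the unknowns at
   n + 1 are the negated unknowns at n. *)
definition orbit_gap :: "afftype \<Rightarrow> nat \<Rightarrow> nat \<Rightarrow> nat \<Rightarrow> nat \<Rightarrow> int" where
  "orbit_gap t a b u k = node_gap t a b u k
     + (if is_A2_even t \<and> b = rk t then node_gap t a (rk t + 1) u k else 0)"

definition mirror_unlinked :: "afftype \<Rightarrow> nat \<Rightarrow> nat \<Rightarrow> bool" where
  "mirror_unlinked t a b \<longleftrightarrow>
     (is_A2_even t \<and> b = rk t \<longrightarrow> Ap t a (rk t + 1) = 0 \<and> Ap t (rk t + 1) a = 0)"

lemma orbit_gap_mirror_unlinked:
  "mirror_unlinked t a b \<Longrightarrow> orbit_gap t a b u k = node_gap t a b u k"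
  by (auto simp: orbit_gap_def mirror_unlinked_def node_gap_def string_gap_def root_gap_def)

lemma untwisted_mirror_unlinked: "tw t = 1 \<Longrightarrow> mirror_unlinked t a b"
  by (cases t) (simp_all add: mirror_unlinked_def)

definition short_neighbour :: "afftype \<Rightarrow> nat \<Rightarrow> nat \<Rightarrow> bool" where
  "short_neighbour t a b \<longleftrightarrow>
     tw t = 1 \<and> 1 \<le> b \<and> b \<le> rk t \<and> dc t a > dc t b \<and> dc t b = 1 \<and> Ac t a b \<noteq> 0"

definition delta_weight :: "afftype \<Rightarrow> nat \<Rightarrow> nat \<Rightarrow> nat \<Rightarrow> nat \<Rightarrow> real" where
  "delta_weight t a b u k =
     (if short_neighbour t a b then
        (if dc t a = 2 then (if k = 2 * u then 1 else 0)
         else if dc t a = 3 then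
           (if k = 3 * u - 1 then 1 else 0) + (if k = 3 * u then 1 else 0) + (if k = 3 * u + 1 then 1 else 0)
         else 0)
      else 0)"

definition vacancy_term :: "afftype \<Rightarrow> nat \<Rightarrow> nat \<Rightarrow> nat \<Rightarrow> nat \<Rightarrow> real" where
  "vacancy_term t a b u k =
     real (epsp t a) * (- real (dp t a) * (real_of_int (Ac t a b) / real (epsc t a * dp t b))
        * real (min (dp t a * u) (dp t b * k)) + (if b = a \<and> k = u then real (dp t a) else 0))
     - delta_weight t a b u k"

definition orbit_gap_bounded :: "afftype \<Rightarrow> nat \<Rightarrow> nat \<Rightarrow> bool" where
  "orbit_gap_bounded t a b \<longleftrightarrow>
     (\<forall>u \<ge> 1. \<forall>k \<ge> 1. real_of_int (orbit_gap t a b u k) \<le> vacancy_term t a b u k)"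

lemma orbit_gap_bounded_orthogonal:
  assumes "mirror_unlinked t a b" "a \<noteq> b" "Ap t a b = 0" "Ap t b a = 0" "Ac t a b = 0"
  shows "orbit_gap_bounded t a b"
  using assms
  by (simp add: orbit_gap_bounded_def orbit_gap_mirror_unlinked node_gap_def string_gap_def
      root_gap_def vacancy_term_def delta_weight_def short_neighbour_def)

lemma orbit_gap_bounded_diagonal:
  assumes "mirror_unlinked t a a" "epsc t a = 1"
  shows "orbit_gap_bounded t a a"
  unfolding orbit_gap_bounded_def
proof (intro allI impI)
  fix u k :: nat
  assume "u \<ge> 1"
  let ?d = "dp t a" and ?\<delta> = "if u = k then 1 else 0 :: int"
  have d: "?d > 0" by (rule dp_pos)
  have "orbit_gap t a a u k = int (epsp t a) * (int ?d * (- 2 * int (min u k) + ?\<delta>))"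
    using \<open>u \<ge> 1\<close> assms(1)
    by (simp add: orbit_gap_mirror_unlinked node_gap_def epsp2_def string_gap_scale[of "int ?d"]
        string_gap_diagonal min_def)
  moreover have "vacancy_term t a a u k
      = real (epsp t a) * (real ?d * (- 2 * real (min u k) + real_of_int ?\<delta>))"
    using assms(2) d
    by (simp add: vacancy_term_def delta_weight_def short_neighbour_def min_def algebra_simps)
  ultimately show "real_of_int (orbit_gap t a a u k) \<le> vacancy_term t a a u k"
    by simp
qed

lemma orbit_gap_bounded_simple_bond:
  assumes "mirror_unlinked t a b" "a \<noteq> b" "Ap t a b = -1" "Ap t b a = -1" "dp t a = dp t b"
    and eps: "int (epsp2 t a b) * int (epsc t a) = int (epsp t a) * (- Ac t a b)"
  shows "orbit_gap_bounded t a b"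
  unfolding orbit_gap_bounded_def
proof (intro allI impI)
  fix u k :: nat
  assume "u \<ge> 1"
  let ?d = "dp t a"
  have d: "?d > 0" by (rule dp_pos)
  have c: "epsc t a > 0" by (simp add: epsc_def)
  have "\<not> short_neighbour t a b"
    using assms(5) by (cases "tw t = 1") (auto simp: short_neighbour_def untwisted_dc)
  then have "vacancy_term t a b u k
      = real (epsp t a) * (- real_of_int (Ac t a b)) / real (epsc t a) * (real ?d * real (min u k))"
    using assms(2,5) d c by (simp add: vacancy_term_def delta_weight_def min_def)
  also have "\<dots> = real (epsp2 t a b) * real (epsc t a) / real (epsc t a) * (real ?d * real (min u k))"
    using arg_cong[OF eps, of real_of_int] by simp
  also have "\<dots> = real (epsp2 t a b) * (real ?d * real (min u k))"
    using c by simp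
  also have "\<dots> = real_of_int (orbit_gap t a b u k)"
    using \<open>u \<ge> 1\<close> assms(1,3,4) assms(5)[symmetric] d
    by (simp add: orbit_gap_mirror_unlinked node_gap_def string_gap_scale[of "int ?d"]
        string_gap_short_long[of 1, simplified] min_def)
  finally show "real_of_int (orbit_gap t a b u k) \<le> vacancy_term t a b u k"
    by simp
qed

lemma orbit_gap_bounded_long_short:
  assumes "dp t a \<in> {2, 3}" "dp t b = 1" "Ap t a b = -1" "Ap t b a = - int (dp t a)" "Ac t a b = -1"
    and short: "short_neighbour t a b"
  shows "orbit_gap_bounded t a b"
  unfolding orbit_gap_bounded_def
proof (intro allI impI)
  fix u k :: nat
  assume "u \<ge> 1"
  let ?d = "dp t a"
  have tw: "tw t = 1" using short by (simp add: short_neighbour_def)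
  have "a \<noteq> b" using assms(1,2) by auto
  have "int ?d \<in> {1, 2, 3}" "int u \<ge> 1" using assms(1) \<open>u \<ge> 1\<close> by auto
  then have "orbit_gap t a b u k
      = int ?d * min (int ?d * int u) (int k) - max 0 (int ?d - 1 - \<bar>int k - int ?d * int u\<bar>)"
    using assms(2-4)
    by (simp add: orbit_gap_mirror_unlinked untwisted_mirror_unlinked[OF tw] node_gap_def
        untwisted_epsp2[OF tw] string_gap_long_short)
  moreover have "vacancy_term t a b u k
      = real ?d * min (real ?d * real u) (real k) - delta_weight t a b u k"
    using assms(2,5) \<open>a \<noteq> b\<close>
    by (simp add: vacancy_term_def untwisted_epsp[OF tw] untwisted_epsc[OF tw] of_nat_min)
  moreover have "delta_weight t a b u k \<le> max 0 (real ?d - 1 - \<bar>real k - real ?d * real u\<bar>)"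
    using assms(1) short \<open>u \<ge> 1\<close>
    by (auto simp: delta_weight_def untwisted_dc[OF tw])
  ultimately show "real_of_int (orbit_gap t a b u k) \<le> vacancy_term t a b u k"
    by (simp add: of_int_min of_int_max)
qed

lemma orbit_gap_bounded_short_long:
  assumes "tw t = 1" "dp t a = 1" "Ap t a b = - int (dp t b)" "Ap t b a = -1" "Ac t a b = - int (dp t b)"
  shows "orbit_gap_bounded t a b"
  unfolding orbit_gap_bounded_def
proof (intro allI impI)
  fix u k :: nat
  assume "u \<ge> 1"
  let ?d = "dp t b"
  have d: "?d > 0" by (rule dp_pos)
  have "a \<noteq> b" using assms(3) by auto
  have "\<not> short_neighbour t a b"
    using assms(1,2) by (simp add: short_neighbour_def untwisted_dc)
  then have "vacancy_term t a b u k = real (min u (?d * k))"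
    using assms(1,2,5) \<open>a \<noteq> b\<close> d
    by (simp add: vacancy_term_def delta_weight_def untwisted_epsp untwisted_epsc)
  moreover have "orbit_gap t a b u k = int (min u (?d * k))"
    using assms(1-4) \<open>u \<ge> 1\<close> d
    by (simp add: orbit_gap_mirror_unlinked untwisted_mirror_unlinked node_gap_def
        untwisted_epsp2 string_gap_short_long of_nat_min)
  ultimately show "real_of_int (orbit_gap t a b u k) \<le> vacancy_term t a b u k"
    by simp
qed

lemma orbit_gap_bounded_A2_even_end:
  assumes "n \<ge> 1"
  shows "orbit_gap_bounded (A2_even n) n n"
  unfolding orbit_gap_bounded_def
proof (intro allI impI)
  fix u k :: nat
  assume "u \<ge> 1"
  let ?t = "A2_even n" and ?\<delta> = "if u = k then 1 else 0 :: int"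
  have eps: "epsp ?t n = 1" "epsp2 ?t n (n + 1) = 1" "epsc ?t n = 2"
    using assms by (simp_all add: epsp2_def epsp_def epsc_def Ap_def chain_adj_def)
  have "orbit_gap ?t n n u k = - int (min u k) + ?\<delta>"
    using \<open>u \<ge> 1\<close> assms eps
    by (simp add: orbit_gap_def node_gap_def epsp2_def dp_def Ap_def chain_adj_def
        string_gap_diagonal string_gap_short_long[of 1, simplified] min_def)
  moreover have "vacancy_term ?t n n u k = - real (min u k) + real_of_int ?\<delta>"
    using eps by (simp add: vacancy_term_def delta_weight_def short_neighbour_def dp_def min_def)
  ultimately show "real_of_int (orbit_gap ?t n n u k) \<le> vacancy_term ?t n n u k"
    by simp
qed

lemma orbit_gap_bounded_by_shape:
  assumes "(mirror_unlinked t a b \<and> a \<noteq> b \<and> Ap t a b = 0 \<and> Ap t b a = 0 \<and> Ac t a b = 0)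
    \<or> (mirror_unlinked t a b \<and> a = b \<and> epsc t a = 1)
    \<or> (mirror_unlinked t a b \<and> a \<noteq> b \<and> Ap t a b = -1 \<and> Ap t b a = -1 \<and> dp t a = dp t b
        \<and> int (epsp2 t a b) * int (epsc t a) = int (epsp t a) * (- Ac t a b))
    \<or> (dp t a \<in> {2, 3} \<and> dp t b = 1 \<and> Ap t a b = -1 \<and> Ap t b a = - int (dp t a) \<and> Ac t a b = -1
        \<and> short_neighbour t a b)
    \<or> (tw t = 1 \<and> dp t a = 1 \<and> Ap t a b = - int (dp t b) \<and> Ap t b a = -1 \<and> Ac t a b = - int (dp t b))"
  shows "orbit_gap_bounded t a b"
  using assms
  by (elim disjE conjE)
    (simp_all add: orbit_gap_bounded_orthogonal orbit_gap_bounded_diagonal orbit_gap_bounded_simple_bond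
      orbit_gap_bounded_long_short orbit_gap_bounded_short_long)

lemmas cartan_data_simps = Ac_def dp_def dc_def epsp2_def
  short_neighbour_def mirror_unlinked_def chain_adj_def

lemma chain_pair_cases:
  fixes a b n :: nat
  obtains "a = b" | "b = a + 1" "b = n" | "b = a + 1" "b \<noteq> n" | "a = b + 1" "a = n" | "a = b + 1" "a \<noteq> n"
    | "a \<noteq> b" "b \<noteq> a + 1" "a \<noteq> b + 1"
  by linarith

lemma orbit_gap_bounded_untwisted_classical:
  assumes "t \<in> {A1 n, B1 n, C1 n, D1 n}" "valid_type t" "a \<in> {1..n}" "b \<in> {1..n}"
  shows "orbit_gap_bounded t a b"
  using assms
  by (cases rule: chain_pair_cases[where a = a and b = b and n = n]; elim insertE emptyE;
      intro orbit_gap_bounded_by_shape;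
      simp add: Ap_def epsp_def epsc_def cartan_data_simps doubleton_eq_iff; arith?)

lemma orbit_gap_bounded_exceptional:
  assumes "t \<in> {E6_1, E7_1, E8_1, F4_1, G2_1, E6_2, D4_3}" "a \<in> {1..rk t}" "b \<in> {1..rk t}"
  shows "orbit_gap_bounded t a b"
proof -
  have "a \<in> {1, 2, 3, 4, 5, 6, 7, 8}" "b \<in> {1, 2, 3, 4, 5, 6, 7, 8}"
    using assms by auto
  then show ?thesis
    using assms
    by (elim insertE emptyE; intro orbit_gap_bounded_by_shape;
        simp add: Ap_def epsp_def epsc_def cartan_data_simps E_adj_def doubleton_eq_iff)
qed

lemma orbit_gap_bounded_A2_odd:
  assumes "2 \<le> n" "a \<in> {1..n}" "b \<in> {1..n}"
  shows "orbit_gap_bounded (A2_odd n) a b"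
  using assms
  by (cases rule: chain_pair_cases[where a = a and b = b and n = n]; intro orbit_gap_bounded_by_shape;
      simp add: Ap_def cartan_data_simps epsp_A2_odd epsc_A2_odd; arith?)

lemma orbit_gap_bounded_D2:
  assumes "2 \<le> n" "a \<in> {1..n}" "b \<in> {1..n}"
  shows "orbit_gap_bounded (D2 n) a b"
  using assms
  by (cases rule: chain_pair_cases[where a = a and b = b and n = n]; intro orbit_gap_bounded_by_shape;
      simp add: cartan_data_simps Ap_D2 epsp_D2 epsc_D2; arith?)

lemma orbit_gap_bounded_A2_even:
  assumes "1 \<le> n" "a \<in> {1..n}" "b \<in> {1..n}"
  shows "orbit_gap_bounded (A2_even n) a b"
proof (cases "a = n \<and> b = n")
  case True
  then show ?thesis using orbit_gap_bounded_A2_even_end assms(1) by simp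
next
  case False
  then show ?thesis
    using assms
    by (cases rule: chain_pair_cases[where a = a and b = b and n = n]; intro orbit_gap_bounded_by_shape;
        simp add: Ap_def cartan_data_simps epsp_A2_even epsc_A2_even; arith?)
qed

lemma orbit_gap_bounded_valid:
  assumes "valid_type t" "a \<in> {1..rk t}" "b \<in> {1..rk t}"
  shows "orbit_gap_bounded t a b"
  using assms
  by (cases t) (simp_all add: orbit_gap_bounded_untwisted_classical[where n = "rk t"]
      orbit_gap_bounded_A2_odd orbit_gap_bounded_D2 orbit_gap_bounded_A2_even orbit_gap_bounded_exceptional)

section \<open>The order balance at one member of a string\<close>

definition eta_gap :: "afftype \<Rightarrow> (nat \<Rightarrow> nat \<Rightarrow> nat) \<Rightarrow> nat \<Rightarrow> nat \<Rightarrow> int" where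
  "eta_gap t N a u =
     (\<Sum>b\<in>{1..ntil t}. \<Sum>k\<in>supp (Next t N) b. int (Next t N b k) * node_gap t a b u k)"

lemma eta_plus_minus_eta_minus:
  assumes "int m + 1 - 2 * int i = int u"
  shows "eta_plus t N a m i - eta_minus t N a m i = int (kappa0 t) * eta_gap t N a u"
  unfolding eta_plus_def eta_minus_def eta_gap_def assms right_diff_distrib[symmetric]
    sum_subtractf[symmetric]
  by (intro arg_cong[where f = "\<lambda>x. int (kappa0 t) * x"] sum.cong refl)
    (simp add: node_gap_def string_gap_def root_gap_def sum_distrib_left right_diff_distrib)

lemma eta_gap_orbit_sum:
  assumes "rk t \<ge> 1"
  shows "eta_gap t N a u = (\<Sum>b\<in>{1..rk t}. \<Sum>k\<in>supp N b. int (N b k) * orbit_gap t a b u k)"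
proof (cases "is_A2_even t")
  case False
  then show ?thesis
    by (simp add: eta_gap_def orbit_gap_def ntil_def Next_def supp_def)
next
  case True
  let ?n = "rk t"
  let ?S = "\<lambda>c. \<Sum>k\<in>supp N ?n. int (N ?n k) * node_gap t a c u k"
  have ntil: "{1..ntil t} = insert (?n + 1) {1..?n}"
    using True by (auto simp: ntil_def)
  have "eta_gap t N a u = ?S (?n + 1) + (\<Sum>b\<in>{1..?n}. \<Sum>k\<in>supp N b. int (N b k) * node_gap t a b u k)"
    unfolding eta_gap_def ntil using True by (simp add: Next_def supp_def)
  also have "?S (?n + 1) = (\<Sum>b\<in>{1..?n}. if b = ?n then ?S (?n + 1) else 0)"
    using assms by (simp add: sum.delta')
  also have "(\<Sum>b\<in>{1..?n}. if b = ?n then ?S (?n + 1) else 0)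
      + (\<Sum>b\<in>{1..?n}. \<Sum>k\<in>supp N b. int (N b k) * node_gap t a b u k)
      = (\<Sum>b\<in>{1..rk t}. \<Sum>k\<in>supp N b. int (N b k) * orbit_gap t a b u k)"
    unfolding sum.distrib[symmetric]
    by (rule sum.cong) (auto simp: orbit_gap_def True sum.distrib[symmetric] algebra_simps)
  finally show ?thesis .
qed

lemma finite_supp: "fin_supp t N \<Longrightarrow> b \<in> {1..rk t} \<Longrightarrow> finite (supp N b)"
  unfolding fin_supp_def
  by (rule finite_subset[where B = "snd ` {(a, m). 1 \<le> a \<and> a \<le> rk t \<and> 1 \<le> m \<and> N a m \<noteq> 0}"])
    (auto simp: supp_def image_iff)

lemma sum_supp_indicator:
  assumes "finite (supp N b)" "c \<ge> 1"
  shows "(\<Sum>k\<in>supp N b. real (N b k) * (if k = c then 1 else 0)) = real (N b c)"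
  using assms by (simp add: sum.delta' supp_def if_distrib[of "\<lambda>x. _ * x"] cong: if_cong)

lemma delta_weight_sum_ge_Delta:
  assumes "fin_supp t N" "u \<ge> 1"
  shows "- (\<Sum>b\<in>{1..rk t}. \<Sum>k\<in>supp N b. real (N b k) * delta_weight t a b u k)
    \<le> real (epsp t a) * real_of_int (Delta t N a u)"
proof (cases "\<exists>a'. short_neighbour t a a'")
  case True
  define a' where "a' = (SOME a'. 1 \<le> a' \<and> a' \<le> rk t \<and> dc t a > dc t a' \<and> dc t a' = 1 \<and> Ac t a a' \<noteq> 0)"
  have tw: "tw t = 1" and a': "short_neighbour t a a'"
    using True someI_ex[of "\<lambda>a'. 1 \<le> a' \<and> a' \<le> rk t \<and> dc t a > dc t a' \<and> dc t a' = 1 \<and> Ac t a a' \<noteq> 0"]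
    by (auto simp: short_neighbour_def a'_def)
  have fin: "finite (supp N a')" using finite_supp[OF assms(1)] a' by (simp add: short_neighbour_def)
  have "Delta t N a u = (if dc t a = 2 then - int (N a' (2 * u))
      else if dc t a = 3 then - int (N a' (3 * u - 1) + N a' (3 * u) + N a' (3 * u + 1)) else 0)"
    using True unfolding Delta_def a'_def[symmetric] by (simp add: short_neighbour_def Let_def)
  then have "(\<Sum>k\<in>supp N a'. real (N a' k) * delta_weight t a a' u k) = - real_of_int (Delta t N a u)"
    using a' assms(2)
    by (simp add: delta_weight_def distrib_left sum.distrib sum_supp_indicator[OF fin])
  moreover have "(\<Sum>k\<in>supp N a'. real (N a' k) * delta_weight t a a' u k)
      \<le> (\<Sum>b\<in>{1..rk t}. \<Sum>k\<in>supp N b. real (N b k) * delta_weight t a b u k)"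
    using a'
    by (intro member_le_sum[where f = "\<lambda>b. \<Sum>k\<in>supp N b. real (N b k) * delta_weight t a b u k"]
        sum_nonneg)
      (auto simp: delta_weight_def short_neighbour_def)
  ultimately show ?thesis using tw by (simp add: untwisted_epsp)
next
  case False
  then have "Delta t N a u = 0" by (auto simp: Delta_def short_neighbour_def)
  moreover have "0 \<le> (\<Sum>b\<in>{1..rk t}. \<Sum>k\<in>supp N b. real (N b k) * delta_weight t a b u k)"
    by (intro sum_nonneg) (simp add: delta_weight_def)
  ultimately show ?thesis by simp
qed

lemma vacancy_term_sum:
  assumes "fin_supp t N" "a \<in> {1..rk t}" "u \<ge> 1"
  shows "(\<Sum>b\<in>{1..rk t}. \<Sum>k\<in>supp N b. real (N b k) * vacancy_term t a b u k)
    = real (epsp t a) * real (dp t a) * (vacP t \<nu> N a u - gam \<nu> a u + real (N a u))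
      - (\<Sum>b\<in>{1..rk t}. \<Sum>k\<in>supp N b. real (N b k) * delta_weight t a b u k)"
proof -
  let ?c = "\<lambda>b k. real_of_int (Ac t a b) / real (epsc t a * dp t b)
              * real (min (dp t a * u) (dp t b * k)) * real (N b k)"
  have diag: "(\<Sum>b\<in>{1..rk t}. \<Sum>k\<in>supp N b. real (N b k) * (if b = a \<and> k = u then 1 else 0))
      = real (N a u)"
  proof -
    have "(\<Sum>b\<in>{1..rk t}. \<Sum>k\<in>supp N b. real (N b k) * (if b = a \<and> k = u then 1 else 0))
        = (\<Sum>b\<in>{1..rk t}. if b = a then \<Sum>k\<in>supp N b. real (N b k) * (if k = u then 1 else 0) else 0)"
      by (intro sum.cong refl) auto
    also have "\<dots> = real (N a u)"
      using assms by (simp add: sum_supp_indicator finite_supp)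
    finally show ?thesis .
  qed
  have "(\<Sum>b\<in>{1..rk t}. \<Sum>k\<in>supp N b. real (N b k) * vacancy_term t a b u k)
    = (\<Sum>b\<in>{1..rk t}. \<Sum>k\<in>supp N b. - (real (epsp t a) * real (dp t a)) * ?c b k
        + real (epsp t a) * real (dp t a) * (real (N b k) * (if b = a \<and> k = u then 1 else 0))
        - real (N b k) * delta_weight t a b u k)"
    unfolding vacancy_term_def by (intro sum.cong refl) (simp add: algebra_simps)
  also have "\<dots> = - (real (epsp t a) * real (dp t a)) * (\<Sum>b\<in>{1..rk t}. \<Sum>k\<in>supp N b. ?c b k)
      + real (epsp t a) * real (dp t a)
        * (\<Sum>b\<in>{1..rk t}. \<Sum>k\<in>supp N b. real (N b k) * (if b = a \<and> k = u then 1 else 0))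
      - (\<Sum>b\<in>{1..rk t}. \<Sum>k\<in>supp N b. real (N b k) * delta_weight t a b u k)"
    by (simp add: sum.distrib sum_subtractf sum_distrib_left sum_negf)
  also have "(\<Sum>b\<in>{1..rk t}. \<Sum>k\<in>supp N b. ?c b k) = gam \<nu> a u - vacP t \<nu> N a u"
    by (simp add: vacP_def)
  finally show ?thesis by (simp only: diag) (simp add: algebra_simps)
qed

lemma eta_gap_le:
  assumes "valid_type t" "fin_supp t N" "a \<in> {1..rk t}" "u \<ge> 1"
  shows "real_of_int (eta_gap t N a u) \<le> real (epsp t a) *
    (real (dp t a) * (vacP t \<nu> N a u - gam \<nu> a u + real (N a u)) + real_of_int (Delta t N a u))"
proof -
  have "rk t \<ge> 1" using assms(3) by simp
  then have "real_of_int (eta_gap t N a u)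
      = (\<Sum>b\<in>{1..rk t}. \<Sum>k\<in>supp N b. real (N b k) * real_of_int (orbit_gap t a b u k))"
    by (simp add: eta_gap_orbit_sum)
  also have "\<dots> \<le> (\<Sum>b\<in>{1..rk t}. \<Sum>k\<in>supp N b. real (N b k) * vacancy_term t a b u k)"
    using orbit_gap_bounded_valid[OF assms(1,3)] assms(4)
    by (intro sum_mono mult_left_mono) (auto simp: orbit_gap_bounded_def supp_def)
  also have "\<dots> \<le> real (epsp t a) *
      (real (dp t a) * (vacP t \<nu> N a u - gam \<nu> a u + real (N a u)) + real_of_int (Delta t N a u))"
    unfolding vacancy_term_sum[OF assms(2-4), of \<nu>]
    using delta_weight_sum_ge_Delta[OF assms(2,4), of a]
    by (simp add: distrib_left)
  finally show ?thesis .
qed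

lemma xi_minus_minus_xi_plus:
  assumes "int m + 1 - 2 * int i = int u"
  shows "real_of_int (xi_minus t \<nu> a m i - xi_plus t \<nu> a m i)
    = real (kappa0 t * epsp t a * dp t a) * gam \<nu> a u"
proof -
  have "xi_plus t \<nu> a m i = 0"
    unfolding xi_plus_def assms by (auto intro!: sum.neutral simp: supp_def)
  moreover have "real_of_int (xi_minus t \<nu> a m i) = real (kappa0 t * epsp t a * dp t a) * gam \<nu> a u"
    unfolding xi_minus_def assms gam_def
    by (simp add: sum_distrib_left) (auto intro!: sum.cong simp: min_def)
  ultimately show ?thesis by simp
qed

lemma bethe_order_step_le:
  assumes "valid_type t" "fin_supp t N" "a \<in> {1..rk t}"
    and "int m + 1 - 2 * int j = int u" "u \<ge> 1"
  shows "real_of_int ((xi_minus t \<nu> a m j - xi_plus t \<nu> a m j) + (eta_plus t N a m j - eta_minus t N a m j))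
    \<le> real (kappa0 t * epsp t a) *
       (real (dp t a) * (vacP t \<nu> N a u + real (N a u)) + real_of_int (Delta t N a u))"
  using xi_minus_minus_xi_plus[OF assms(4)] eta_plus_minus_eta_minus[OF assms(4)]
    mult_left_mono[OF eta_gap_le[OF assms(1-3,5), of \<nu>], of "real (kappa0 t)"]
  by (simp add: algebra_simps)

section \<open>String solutions\<close>

lemma fls_subdegree_base_factor_diff_pos:
  fixes f g :: "'a::ab_group_add fls"
  assumes "fls_nth f (fls_subdegree f) = fls_nth g (fls_subdegree g)"
    and "fls_base_factor f \<noteq> fls_base_factor g"
  shows "fls_subdegree (fls_base_factor f - fls_base_factor g) > 0"
proof -
  let ?h = "fls_base_factor f - fls_base_factor g"
  have "?h \<noteq> 0" using assms(2) by simp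
  have "0 \<le> fls_subdegree ?h"
    by (rule fls_subdegree_ge0I) (simp add: fls_base_factor_nth)
  moreover have "fls_nth ?h 0 = 0" using assms(1) by (simp add: fls_base_factor_nth)
  then have "fls_subdegree ?h \<noteq> 0" using nth_fls_subdegree_nonzero[OF \<open>?h \<noteq> 0\<close>] by auto
  ultimately show ?thesis by simp
qed

lemma zeta_pos:
  assumes "string_solution t \<nu> N M x lab" "a \<in> {1..rk t}" "(m, \<alpha>, j) \<in> Idx N a" "2 \<le> j"
    and "zeta x lab a m \<alpha> j = Some z"
  shows "z > 0"
proof -
  have leading: "lcoeff (x a (lab a (m, \<alpha>, i))) = lcoeff (x a (lab a (m, \<alpha>, 1)))"
    if "(m, \<alpha>, i) \<in> Idx N a" for i
    using assms(1,2) that unfolding string_solution_def by blast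
  have "(m, \<alpha>, j - 1) \<in> Idx N a" using assms(3,4) by (auto simp: Idx_def)
  then have "lcoeff (x a (lab a (m, \<alpha>, j))) = lcoeff (x a (lab a (m, \<alpha>, j - 1)))"
    using leading assms(3) by simp
  moreover have "ordE (fls_base_factor (x a (lab a (m, \<alpha>, j)))
      - fls_base_factor (x a (lab a (m, \<alpha>, j - 1)))) = Some z"
    using assms(3-5) by (simp add: zeta_def Idx_def)
  ultimately show ?thesis
    using fls_subdegree_base_factor_diff_pos
    by (auto simp: ordE_def lcoeff_def split: if_splits)
qed

lemma zeta_step:
  assumes gen: "generic_string_solution t \<nu> N M x lab" and "a \<in> {1..rk t}" "(m, \<alpha>, j) \<in> Idx N a"
  shows "\<exists>z z'. zeta x lab a m \<alpha> j = Some z \<and> zeta x lab a m \<alpha> (j + 1) = Some z' \<and>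
    z' - z = (xi_minus t \<nu> a m j - xi_plus t \<nu> a m j) + (eta_plus t N a m j - eta_minus t N a m j)"
proof -
  let ?l = "lab a (m, \<alpha>, j)"
  let ?Fp = "Fplus t \<nu> x a ?l" and ?Fm = "Fminus t \<nu> x a ?l"
  let ?Gp = "Gplus t M x a ?l" and ?Gm = "Gminus t M x a ?l"
  have sol: "string_solution t \<nu> N M x lab" using gen by (simp add: generic_string_solution_def)
  then have "bij_betw (lab a) (Idx N a) {1..M a}"
    using assms(2) by (simp add: string_solution_def)
  then have "?l \<in> {1..M a}"
    using assms(3) by (meson bij_betwE)
  then have eq: "?Fp * ?Gm = ?Fm * ?Gp" and nz: "?Fp * ?Gm \<noteq> 0"
    using sol assms(2) by (simp add: string_solution_def bethe_def, simp add: string_solution_def)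
  have ord: "ordE ?Fp = Some (xi_plus t \<nu> a m j)" "ordE ?Fm = Some (xi_minus t \<nu> a m j)"
    "ordE ?Gp = oplus (eta_plus t N a m j) (zeta x lab a m \<alpha> j)"
    "ordE ?Gm = oplus (eta_minus t N a m j) (zeta x lab a m \<alpha> (j + 1))"
    using gen assms(2,3) unfolding generic_string_solution_def by fastforce+
  have "?Fp \<noteq> 0" "?Gm \<noteq> 0" "?Fm \<noteq> 0" "?Gp \<noteq> 0" using nz eq by auto
  obtain z where z: "zeta x lab a m \<alpha> j = Some z" "fls_subdegree ?Gp = eta_plus t N a m j + z"
    using ord(3) \<open>?Gp \<noteq> 0\<close> by (cases "zeta x lab a m \<alpha> j") (auto simp: ordE_def oplus_def)
  obtain z' where z': "zeta x lab a m \<alpha> (j + 1) = Some z'" "fls_subdegree ?Gm = eta_minus t N a m j + z'"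
    using ord(4) \<open>?Gm \<noteq> 0\<close> by (cases "zeta x lab a m \<alpha> (j + 1)") (auto simp: ordE_def oplus_def)
  have "fls_subdegree ?Fp = xi_plus t \<nu> a m j" "fls_subdegree ?Fm = xi_minus t \<nu> a m j"
    using ord(1,2) \<open>?Fp \<noteq> 0\<close> \<open>?Fm \<noteq> 0\<close> by (simp_all add: ordE_def)
  moreover have "fls_subdegree ?Fp + fls_subdegree ?Gm = fls_subdegree ?Fm + fls_subdegree ?Gp"
    using arg_cong[OF eq, of fls_subdegree] \<open>?Fp \<noteq> 0\<close> \<open>?Gm \<noteq> 0\<close> \<open>?Fm \<noteq> 0\<close> \<open>?Gp \<noteq> 0\<close>
    by simp
  ultimately show ?thesis using z z' by auto
qed

lemma string_order_sum_pos:
  assumes gen: "generic_string_solution t \<nu> N M x lab" and a: "a \<in> {1..rk t}"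
    and "N a m > 0" "\<alpha> \<in> {1..N a m}" "1 \<le> L" "L < m"
  shows "0 < (\<Sum>j = 1..L. (xi_minus t \<nu> a m j - xi_plus t \<nu> a m j) + (eta_plus t N a m j - eta_minus t N a m j))"
proof -
  define z where "z j = the (zeta x lab a m \<alpha> j)" for j
  have idx: "(m, \<alpha>, j) \<in> Idx N a" if "j \<in> {1..m}" for j
    using assms(3-6) that by (auto simp: Idx_def)
  have "(\<Sum>j = 1..L. (xi_minus t \<nu> a m j - xi_plus t \<nu> a m j) + (eta_plus t N a m j - eta_minus t N a m j))
      = (\<Sum>j = 1..L. z (Suc j) - z j)"
    using zeta_step[OF gen a idx] assms(6) by (intro sum.cong refl) (force simp: z_def)
  also have "\<dots> = z (Suc L) - z 1"
    using sum_Suc_diff[of 1 L z] assms(5) by simp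
  also have "z 1 = 0" by (simp add: z_def zeta_def)
  finally show ?thesis
    using zeta_step[OF gen a idx[of L]] zeta_pos[OF _ a idx[of "Suc L"]] gen assms(5,6)
    by (force simp: z_def generic_string_solution_def)
qed

theorem proposition2p6:
  fixes t :: afftype and \<nu> N :: "nat \<Rightarrow> nat \<Rightarrow> nat" and M :: "nat \<Rightarrow> nat"
  assumes "valid_type t"
    and "fin_supp t \<nu>" and "fin_supp t N"
    and "\<forall>a\<in>{1..rk t}. M a = (\<Sum>m\<in>supp N a. m * N a m)"
    and "\<exists>x lab. generic_string_solution t \<nu> N M x lab"
  shows "\<forall>a\<in>{1..rk t}. \<forall>m \<ge> 1. N a m > 0 \<longrightarrow>
           (\<forall>\<alpha>\<in>{1..N a m}. \<forall>i\<in>{2..m}.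
              (\<Sum>k = 1..min (i - 1) (m + 1 - i).
                 real (dp t a) * (vacP t \<nu> N a (m + 1 - 2 * k) + real (N a (m + 1 - 2 * k)))
                 + real_of_int (Delta t N a (m + 1 - 2 * k))) > 0)"
proof (intro ballI allI impI)
  fix a m \<alpha> i
  assume a: "a \<in> {1..rk t}" and "N a m > 0" "\<alpha> \<in> {1..N a m}" "i \<in> {2..m}"
  obtain x lab where gen: "generic_string_solution t \<nu> N M x lab" using assms(5) by blast
  define L where "L = min (i - 1) (m + 1 - i)"
  have L: "1 \<le> L" "2 * L \<le> m" using \<open>i \<in> {2..m}\<close> by (auto simp: L_def)
  let ?K = "real (kappa0 t * epsp t a)"
  let ?E = "\<lambda>k. real (dp t a) * (vacP t \<nu> N a (m + 1 - 2 * k) + real (N a (m + 1 - 2 * k)))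
                 + real_of_int (Delta t N a (m + 1 - 2 * k))"
  have "0 < (\<Sum>j = 1..L. real_of_int ((xi_minus t \<nu> a m j - xi_plus t \<nu> a m j)
      + (eta_plus t N a m j - eta_minus t N a m j)))"
    unfolding of_int_sum[symmetric] of_int_0_less_iff
    using string_order_sum_pos[OF gen a \<open>N a m > 0\<close> \<open>\<alpha> \<in> {1..N a m}\<close> L(1)] L
    by simp
  also have "\<dots> \<le> (\<Sum>j = 1..L. ?K * ?E j)"
    using bethe_order_step_le[OF assms(1,3) a] L by (intro sum_mono) auto
  finally have "0 < ?K * (\<Sum>j = 1..L. ?E j)" by (simp add: sum_distrib_left)
  moreover have "?K > 0" using epsp_pos[of t a] by (simp add: kappa0_def)
  ultimately show "(\<Sum>k = 1..min (i - 1) (m + 1 - i). ?E k) > 0"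
    unfolding L_def by (rule zero_less_mult_pos)
qed

end
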